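(* Let $\alpha>0$, $n\ge 3$. Let $w$ solve \[ w''+\frac{n-1}{t}w'+t^{\alpha}e^{w}=0,\qquad w(0)=0,\quad w'(0)=0, \] let $w_0(t)=\ln\bigl((2+\alpha)(n-2)\bigr)-(2+\alpha)\ln t$, and set $p(t)=w(t)-w_0(t)$. Let $t_0\in(0,\infty)$ and let $z$ be the solution of the Euler equation \[ z''+\frac{n-1}{t}z'+\frac{(2+\alpha)(n-2)}{t^2}z=0 \] with $z(t_0)=p(t_0)$ and $z'(t_0)=p'(t_0)$. If $z(t)<0$ on $(t_0,\infty)$, then $p(t)<0$ on $(t_0,\infty)$.
   Context: The solution $w$ is defined for all $t>0$. The function $w_0$ solves the same differential equation as $w$ for $t>0$. *)

theory Defs
  imports "HOL-Analysis.Analysis"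
begin

definition w0 :: "real \<Rightarrow> nat \<Rightarrow> real \<Rightarrow> real" where
  "w0 \<alpha> n t = ln ((2 + \<alpha>) * (real n - 2)) - (2 + \<alpha>) * ln t"

end

theory Submission
  imports Defs
begin

text \<open>
  With \<open>p = w - w0\<close> and \<open>K = (2 + \<alpha>)(n - 2)\<close> the equation for \<open>w\<close> becomes
  \<open>p'' + (n - 1)/t p' + K/t\<^sup>2 (e\<^sup>p - 1) = 0\<close>, whose linearisation at \<open>p = 0\<close> is the Euler
  equation satisfied by \<open>z\<close>. Since \<open>e\<^sup>p - 1 \<ge> p\<close> and \<open>z \<le> 0\<close>, the Wronskian
  \<open>t\<^bsup>n-1\<^esup> (p' z - p z')\<close> is nondecreasing and vanishes at \<open>t0\<close>, so \<open>p / z\<close> is nondecreasing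
  on \<open>(t0, \<infinity>)\<close>. Thus \<open>p(t1) \<ge> 0\<close> for some \<open>t1 > t0\<close> forces \<open>p \<ge> 0\<close> on \<open>(t0, t1]\<close>, hence
  \<open>z(t0) = z'(t0) = 0\<close>, and by uniqueness for the Euler equation \<open>z\<close> would vanish identically.
\<close>

lemma isCont_le_of_eventually_at_right:
  fixes f :: "real \<Rightarrow> real"
  assumes "isCont f a" "eventually (\<lambda>s. f s \<le> c) (at_right a)"
  shows "f a \<le> c"
proof (rule tendsto_upperbound)
  show "(f \<longlongrightarrow> f a) (at_right a)"
    using assms(1) by (simp add: isCont_def filterlim_at_split)
qed (use assms(2) in simp_all)

lemma has_real_derivative_nonneg_at_right_min:
  fixes f :: "real \<Rightarrow> real"
  assumes "(f has_real_derivative D) (at a)" "eventually (\<lambda>s. f a \<le> f s) (at_right a)"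
  shows "D \<ge> 0"
proof (rule tendsto_lowerbound)
  show "((\<lambda>s. (f s - f a) / (s - a)) \<longlongrightarrow> D) (at_right a)"
    using assms(1) by (simp add: has_field_derivative_iff filterlim_at_split)
  show "eventually (\<lambda>s. (f s - f a) / (s - a) \<ge> 0) (at_right a)"
    using assms(2) eventually_at_right_less[of a]
    by eventually_elim simp
qed simp

lemma two_mult_mult_le_sum_squares:
  fixes a b x C :: real
  assumes "\<bar>x\<bar> \<le> C"
  shows "2 * a * b * x \<le> C * (a\<^sup>2 + b\<^sup>2)"
proof -
  have "2 * a * b * x \<le> \<bar>2 * a * b\<bar> * \<bar>x\<bar>" by (metis abs_ge_self abs_mult)
  also have "\<dots> \<le> (a\<^sup>2 + b\<^sup>2) * C"
    using assms sum_squares_bound[of a b] sum_squares_bound[of "-a" b]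
    by (intro mult_mono) (auto simp: abs_le_iff)
  finally show ?thesis by (simp add: mult.commute)
qed

lemma euler_ode_zero_data_imp_zero:
  fixes z z' z'' :: "real \<Rightarrow> real" and c K t0 t :: real
  assumes "t0 > 0" "c \<ge> 0" "K \<ge> 0" "t \<ge> t0"
    and z_d1: "\<And>s. s \<ge> t0 \<Longrightarrow> (z has_real_derivative z' s) (at s)"
    and z_d2: "\<And>s. s \<ge> t0 \<Longrightarrow> (z' has_real_derivative z'' s) (at s)"
    and z_ode: "\<And>s. s \<ge> t0 \<Longrightarrow> z'' s + c / s * z' s + K / s\<^sup>2 * z s = 0"
    and init: "z t0 = 0" "z' t0 = 0"
  shows "z t = 0"
proof -
  \<comment> \<open>An energy estimate: \<open>C\<close> bounds \<open>|1 - K/s\<^sup>2|\<close> on \<open>[t0, \<infinity>)\<close>, and the damping term has the right sign.\<close>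
  define C where "C = 1 + K / t0\<^sup>2"
  define F where "F s = ((z s)\<^sup>2 + (z' s)\<^sup>2) * exp (- C * s)" for s
  have "F t \<le> F t0"
  proof (rule DERIV_nonpos_imp_nonincreasing[OF \<open>t \<ge> t0\<close>])
    fix s assume s: "t0 \<le> s" "s \<le> t"
    have "(F has_real_derivative
        (2 * z s * z' s + 2 * z' s * z'' s - C * ((z s)\<^sup>2 + (z' s)\<^sup>2)) * exp (- C * s)) (at s)"
      unfolding F_def by (auto intro!: derivative_eq_intros z_d1 z_d2 s simp: algebra_simps)
    moreover have "2 * z s * z' s + 2 * z' s * z'' s - C * ((z s)\<^sup>2 + (z' s)\<^sup>2) \<le> 0"
    proof -
      have K_s: "0 \<le> K / s\<^sup>2" "K / s\<^sup>2 \<le> K / t0\<^sup>2"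
        using \<open>K \<ge> 0\<close> \<open>t0 > 0\<close> s by (auto intro!: divide_left_mono power_mono)
      have "2 * z s * z' s + 2 * z' s * z'' s
          = 2 * z s * z' s * (1 - K / s\<^sup>2) - 2 * c / s * (z' s)\<^sup>2"
      proof -
        have z'': "z'' s = - c / s * z' s - K / s\<^sup>2 * z s"
          using z_ode[OF s(1)] by (simp add: algebra_simps)
        show ?thesis unfolding z'' power2_eq_square by (simp add: algebra_simps)
      qed
      also have "\<dots> \<le> 2 * z s * z' s * (1 - K / s\<^sup>2)"
        using \<open>c \<ge> 0\<close> \<open>t0 > 0\<close> s by simp
      also have "\<dots> \<le> C * ((z s)\<^sup>2 + (z' s)\<^sup>2)"
        using K_s by (intro two_mult_mult_le_sum_squares) (auto simp: C_def abs_le_iff)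
      finally show ?thesis by simp
    qed
    ultimately show "\<exists>y. (F has_real_derivative y) (at s) \<and> y \<le> 0"
      by (meson exp_gt_zero less_imp_le mult_nonpos_nonneg)
  qed
  then have "(z t)\<^sup>2 + (z' t)\<^sup>2 \<le> 0"
    using init by (simp add: F_def mult_le_0_iff)
  then show ?thesis by (smt (verit) zero_le_power2 zero_eq_power2)
qed

lemma wronskian_nonneg_of_supersolution:
  fixes p p' p'' z z' z'' N :: "real \<Rightarrow> real" and c K t0 t :: real
  assumes "t0 > 0" "K \<ge> 0" "t \<ge> t0"
    and p_d1: "\<And>s. s \<ge> t0 \<Longrightarrow> (p has_real_derivative p' s) (at s)"
    and p_d2: "\<And>s. s \<ge> t0 \<Longrightarrow> (p' has_real_derivative p'' s) (at s)"
    and z_d1: "\<And>s. s \<ge> t0 \<Longrightarrow> (z has_real_derivative z' s) (at s)"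
    and z_d2: "\<And>s. s \<ge> t0 \<Longrightarrow> (z' has_real_derivative z'' s) (at s)"
    and p_ode: "\<And>s. s \<ge> t0 \<Longrightarrow> p'' s + c / s * p' s + K / s\<^sup>2 * N s = 0"
    and z_ode: "\<And>s. s \<ge> t0 \<Longrightarrow> z'' s + c / s * z' s + K / s\<^sup>2 * z s = 0"
    and p_le_N: "\<And>s. s \<ge> t0 \<Longrightarrow> p s \<le> N s"
    and z_nonpos: "\<And>s. s \<ge> t0 \<Longrightarrow> z s \<le> 0"
    and init: "p t0 = z t0" "p' t0 = z' t0"
  shows "p' t * z t - p t * z' t \<ge> 0"
proof -
  define W where "W s = s powr c * (p' s * z s - p s * z' s)" for s
  have W_deriv: "(W has_real_derivative s powr c * (K / s\<^sup>2 * z s * (p s - N s))) (at s)"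
    if s: "s \<ge> t0" for s
  proof -
    have "(W has_real_derivative c * s powr (c - 1) * (p' s * z s - p s * z' s)
        + s powr c * (p'' s * z s - p s * z'' s)) (at s)"
      unfolding W_def using s \<open>t0 > 0\<close>
      by (auto intro!: derivative_eq_intros p_d1 p_d2 z_d1 z_d2 simp: algebra_simps)
    moreover have "c * s powr (c - 1) = s powr c * (c / s)"
      using s \<open>t0 > 0\<close> by (simp add: powr_diff)
    moreover have "p'' s = - c / s * p' s - K / s\<^sup>2 * N s" "z'' s = - c / s * z' s - K / s\<^sup>2 * z s"
      using p_ode[OF s] z_ode[OF s] by (simp_all add: algebra_simps)
    ultimately show ?thesis by (simp add: algebra_simps diff_divide_distrib)
  qed
  have "W t0 \<le> W t"
  proof (rule DERIV_nonneg_imp_nondecreasing[OF \<open>t \<ge> t0\<close>])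
    fix s assume s: "t0 \<le> s" "s \<le> t"
    have "z s * (p s - N s) \<ge> 0"
      using z_nonpos[OF s(1)] p_le_N[OF s(1)] by (simp add: mult_nonpos_nonpos)
    then have "s powr c * (K / s\<^sup>2 * z s * (p s - N s)) \<ge> 0"
      using \<open>K \<ge> 0\<close> by (simp add: mult.assoc)
    then show "\<exists>y. (W has_real_derivative y) (at s) \<and> y \<ge> 0"
      using W_deriv[OF s(1)] by blast
  qed
  moreover have "W t0 = 0" using init by (simp add: W_def)
  ultimately show ?thesis
    using \<open>t \<ge> t0\<close> \<open>t0 > 0\<close> by (simp add: W_def zero_le_mult_iff)
qed

lemma wronskian_nonneg_imp_nonneg_before:
  fixes p p' z z' :: "real \<Rightarrow> real" and a b s :: real
  assumes "a < s" "s \<le> b"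
    and p_d1: "\<And>x. a < x \<Longrightarrow> x \<le> b \<Longrightarrow> (p has_real_derivative p' x) (at x)"
    and z_d1: "\<And>x. a < x \<Longrightarrow> x \<le> b \<Longrightarrow> (z has_real_derivative z' x) (at x)"
    and z_neg: "\<And>x. a < x \<Longrightarrow> x \<le> b \<Longrightarrow> z x < 0"
    and wronskian: "\<And>x. a < x \<Longrightarrow> x \<le> b \<Longrightarrow> p' x * z x - p x * z' x \<ge> 0"
    and "p b \<ge> 0"
  shows "p s \<ge> 0"
proof -
  have "p s / z s \<le> p b / z b"
  proof (rule DERIV_nonneg_imp_nondecreasing[OF \<open>s \<le> b\<close>])
    fix x assume x: "s \<le> x" "x \<le> b"
    with \<open>a < s\<close> have "a < x" by simp
    have "((\<lambda>t. p t / z t) has_real_derivative (p' x * z x - p x * z' x) / (z x * z x)) (at x)"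
      using DERIV_divide[OF p_d1[OF \<open>a < x\<close> x(2)] z_d1[OF \<open>a < x\<close> x(2)]]
        z_neg[OF \<open>a < x\<close> x(2)] by simp
    moreover have "(p' x * z x - p x * z' x) / (z x * z x) \<ge> 0"
      using wronskian[OF \<open>a < x\<close> x(2)] by simp
    ultimately show "\<exists>y. ((\<lambda>t. p t / z t) has_real_derivative y) (at x) \<and> y \<ge> 0" by blast
  qed
  also have "p b / z b \<le> 0"
    using \<open>p b \<ge> 0\<close> z_neg[of b] \<open>a < s\<close> \<open>s \<le> b\<close> by (simp add: divide_nonneg_neg)
  finally show ?thesis
    using z_neg[of s] \<open>a < s\<close> \<open>s \<le> b\<close> by (simp add: divide_le_0_iff)
qed

lemma euler_comparison_neg:
  fixes p p' p'' z z' z'' N :: "real \<Rightarrow> real" and c K t0 t :: real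
  assumes "t0 > 0" "c \<ge> 0" "K \<ge> 0" "t > t0"
    and p_d1: "\<And>s. s \<ge> t0 \<Longrightarrow> (p has_real_derivative p' s) (at s)"
    and p_d2: "\<And>s. s \<ge> t0 \<Longrightarrow> (p' has_real_derivative p'' s) (at s)"
    and z_d1: "\<And>s. s \<ge> t0 \<Longrightarrow> (z has_real_derivative z' s) (at s)"
    and z_d2: "\<And>s. s \<ge> t0 \<Longrightarrow> (z' has_real_derivative z'' s) (at s)"
    and p_ode: "\<And>s. s \<ge> t0 \<Longrightarrow> p'' s + c / s * p' s + K / s\<^sup>2 * N s = 0"
    and z_ode: "\<And>s. s \<ge> t0 \<Longrightarrow> z'' s + c / s * z' s + K / s\<^sup>2 * z s = 0"
    and p_le_N: "\<And>s. s \<ge> t0 \<Longrightarrow> p s \<le> N s"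
    and z_neg: "\<And>s. s > t0 \<Longrightarrow> z s < 0"
    and init: "p t0 = z t0" "p' t0 = z' t0"
  shows "p t < 0"
proof (rule ccontr)
  assume "\<not> p t < 0"
  have z_ev_nonpos: "eventually (\<lambda>s. z s \<le> 0) (at_right t0)"
    using eventually_at_right_less[of t0] by eventually_elim (simp add: less_imp_le z_neg)
  then have "z t0 \<le> 0"
    using isCont_le_of_eventually_at_right DERIV_isCont[OF z_d1] by blast
  then have z_nonpos: "z s \<le> 0" if "s \<ge> t0" for s
    using that z_neg[of s] by (cases "s = t0") auto
  have wronskian: "p' s * z s - p s * z' s \<ge> 0" if "s \<ge> t0" for s
    using wronskian_nonneg_of_supersolution[OF \<open>t0 > 0\<close> \<open>K \<ge> 0\<close> that p_d1 p_d2 z_d1 z_d2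
        p_ode z_ode p_le_N z_nonpos init] .
  have p_ev_nonneg: "eventually (\<lambda>s. p s \<ge> 0) (at_right t0)"
    using eventually_at_right_real[OF \<open>t > t0\<close>]
  proof eventually_elim
    case (elim s)
    show ?case
      by (rule wronskian_nonneg_imp_nonneg_before[of t0 s t p p' z z'])
        (use elim \<open>\<not> p t < 0\<close> p_d1 z_d1 z_neg wronskian in auto)
  qed
  then have "- p t0 \<le> 0"
    by (intro isCont_le_of_eventually_at_right continuous_intros DERIV_isCont[OF p_d1]) auto
  then have "z t0 = 0" "p t0 = 0"
    using \<open>z t0 \<le> 0\<close> init(1) by simp_all
  have "p' t0 \<ge> 0"
    using has_real_derivative_nonneg_at_right_min[OF p_d1] \<open>p t0 = 0\<close> p_ev_nonneg by simp
  moreover have "- z' t0 \<ge> 0"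
    using has_real_derivative_nonneg_at_right_min[OF DERIV_minus[OF z_d1]] \<open>z t0 = 0\<close> z_ev_nonpos
    by simp
  ultimately have "z' t0 = 0" using init(2) by simp
  have "z t = 0"
    using euler_ode_zero_data_imp_zero[OF \<open>t0 > 0\<close> \<open>c \<ge> 0\<close> \<open>K \<ge> 0\<close> _ z_d1 z_d2 z_ode
        \<open>z t0 = 0\<close> \<open>z' t0 = 0\<close>] \<open>t > t0\<close> by simp
  with z_neg[OF \<open>t > t0\<close>] show False by simp
qed

lemma w_minus_w0_ode:
  fixes \<alpha> t w w' w'' :: real and n :: nat
  assumes "\<alpha> > -2" "n \<ge> 3" "t > 0"
    and w_ode: "w'' + (real n - 1) / t * w' + t powr \<alpha> * exp w = 0"
  shows "(w'' - (2 + \<alpha>) / t\<^sup>2) + (real n - 1) / t * (w' + (2 + \<alpha>) / t)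
      + (2 + \<alpha>) * (real n - 2) / t\<^sup>2 * (exp (w - w0 \<alpha> n t) - 1) = 0"
proof -
  define K where "K = (2 + \<alpha>) * (real n - 2)"
  have "K > 0" using assms(1,2) by (simp add: K_def)
  have "exp (w - w0 \<alpha> n t) = exp w * t powr (2 + \<alpha>) / K"
    using \<open>t > 0\<close> \<open>K > 0\<close> by (simp add: w0_def K_def exp_diff exp_add powr_def)
  also have "t powr (2 + \<alpha>) = t powr \<alpha> * t\<^sup>2"
    using \<open>t > 0\<close> by (simp add: powr_add powr_realpow mult.commute)
  finally have K_exp: "K / t\<^sup>2 * exp (w - w0 \<alpha> n t) = t powr \<alpha> * exp w"
    using \<open>t > 0\<close> \<open>K > 0\<close> by simp
  have "(w'' - (2 + \<alpha>) / t\<^sup>2) + (real n - 1) / t * (w' + (2 + \<alpha>) / t)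
      + K / t\<^sup>2 * (exp (w - w0 \<alpha> n t) - 1)
      = w'' + (real n - 1) / t * w' + K / t\<^sup>2 * exp (w - w0 \<alpha> n t)
        + ((real n - 1) * (2 + \<alpha>) - (2 + \<alpha>) - K) / t\<^sup>2"
    using \<open>t > 0\<close> by (simp add: field_simps power2_eq_square)
  also have "\<dots> = 0"
    using K_exp w_ode by (simp add: K_def algebra_simps)
  finally show ?thesis by (simp add: K_def)
qed

theorem lemma3p5:
  fixes \<alpha> :: real and n :: nat and t0 :: real
    and w w' w'' z z' z'' :: "real \<Rightarrow> real"
  assumes alpha: "\<alpha> > 0" and n: "n \<ge> 3"
    and w_d1: "\<And>t. t \<ge> 0 \<Longrightarrow> (w has_real_derivative w' t) (at t within {0..})"
    and w_d2: "\<And>t. t > 0 \<Longrightarrow> (w' has_real_derivative w'' t) (at t)"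
    and w_ode: "\<And>t. t > 0 \<Longrightarrow> w'' t + (real n - 1) / t * w' t + t powr \<alpha> * exp (w t) = 0"
    and w_init: "w 0 = 0" "w' 0 = 0"
    and t0: "t0 > 0"
    and z_d1: "\<And>t. t > 0 \<Longrightarrow> (z has_real_derivative z' t) (at t)"
    and z_d2: "\<And>t. t > 0 \<Longrightarrow> (z' has_real_derivative z'' t) (at t)"
    and z_ode: "\<And>t. t > 0 \<Longrightarrow>
        z'' t + (real n - 1) / t * z' t + (2 + \<alpha>) * (real n - 2) / t\<^sup>2 * z t = 0"
    and z_init: "z t0 = w t0 - w0 \<alpha> n t0"
      "((\<lambda>t. w t - w0 \<alpha> n t) has_real_derivative z' t0) (at t0)"
    and z_neg: "\<And>t. t > t0 \<Longrightarrow> z t < 0"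
  shows "\<forall>t > t0. w t - w0 \<alpha> n t < 0"
proof (intro allI impI)
  fix t assume "t > t0"
  define p where "p s = w s - w0 \<alpha> n s" for s
  define p' where "p' s = w' s + (2 + \<alpha>) / s" for s
  define p'' where "p'' s = w'' s - (2 + \<alpha>) / s\<^sup>2" for s
  have w_deriv: "(w has_real_derivative w' s) (at s)" if "s > 0" for s
  proof -
    have "(w has_real_derivative w' s) (at s within {0<..})"
      using that by (intro DERIV_subset[OF w_d1]) auto
    then show ?thesis using at_within_open[of s "{0<..}"] that by simp
  qed
  have p_d1: "(p has_real_derivative p' s) (at s)" if "s > 0" for s
    unfolding p_def p'_def w0_def using that
    by (auto intro!: derivative_eq_intros w_deriv simp: field_simps)
  have p_d2: "(p' has_real_derivative p'' s) (at s)" if "s > 0" for s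
    unfolding p'_def p''_def using that
    by (auto intro!: derivative_eq_intros w_d2 simp: field_simps power2_eq_square)
  have p_ode:
    "p'' s + (real n - 1) / s * p' s + (2 + \<alpha>) * (real n - 2) / s\<^sup>2 * (exp (p s) - 1) = 0"
    if "s > 0" for s
    using w_minus_w0_ode[OF _ n that w_ode[OF that]] alpha by (simp add: p_def p'_def p''_def)
  have "p t < 0"
  proof (rule euler_comparison_neg[OF t0 _ _ \<open>t > t0\<close>, where N = "\<lambda>s. exp (p s) - 1"])
    fix s assume "s \<ge> t0"
    with t0 have "s > 0" by simp
    then show "(p has_real_derivative p' s) (at s)" "(p' has_real_derivative p'' s) (at s)"
      "(z has_real_derivative z' s) (at s)" "(z' has_real_derivative z'' s) (at s)"
      "p'' s + (real n - 1) / s * p' s + (2 + \<alpha>) * (real n - 2) / s\<^sup>2 * (exp (p s) - 1) = 0"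
      "z'' s + (real n - 1) / s * z' s + (2 + \<alpha>) * (real n - 2) / s\<^sup>2 * z s = 0"
      using p_d1 p_d2 z_d1 z_d2 p_ode z_ode by simp_all
    show "p s \<le> exp (p s) - 1"
      using exp_ge_add_one_self[of "p s"] by linarith
  next
    show "p' t0 = z' t0"
      using DERIV_unique[OF p_d1[OF t0] z_init(2)[folded p_def]] .
  qed (use alpha n z_neg z_init(1) in \<open>simp_all add: p_def\<close>)
  then show "w t - w0 \<alpha> n t < 0" by (simp add: p_def)
qed

end
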